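(* Let $d,t,m,L,N_1,\dots,N_L$ be natural numbers with $N_L=1$, let $\mathbf{N}=(N_L,N_{L-1},\dots,N_1,N_0=d)$, and let $\mathcal{W}=\{w^1,\dots,w^t\}\subset\mathbb{R}^d$. Suppose that (1) $t\geq 3m(N_1+1)(N_2+1)\cdots(N_L+1)$; (2) $w^1_1>w^2_1>\dots>w^t_1$ and $w^i_j=0$ for all $i$ and all $j=2,\dots,d$; (3) $f:\mathbb{R}^d\to\{0,1\}$ satisfies $f(w^i)\neq f(w^{i+1})$ for $i=1,\dots,t-1$. Then for any $\varphi\in\mathcal{NN}_{\mathbf{N},L}$ and any monotonic $g:\mathbb{R}\to\mathbb{R}$ there exists $\mathcal{U}\subset\mathcal{W}$ with $|\mathcal{U}|\geq m$ and $|g(\varphi(w))-f(w)|\geq 1/2$ for all $w\in\mathcal{U}$.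
   Context: $\mathcal{NN}_{\mathbf{N},L}$ is the set of maps $\varphi=W^L\rho W^{L-1}\rho\cdots\rho W^1:\mathbb{R}^d\to\mathbb{R}$ where each $W^\ell:\mathbb{R}^{N_{\ell-1}}\to\mathbb{R}^{N_\ell}$ is affine and $\rho(t)=\max\{0,t\}$ is applied coordinatewise. *)

theory Defs
  imports Complex_Main
begin

text \<open>Points of R^k are represented as functions nat => real; only the coordinates
  0,...,k-1 are significant (coordinate j of the paper is index j-1 here).\<close>

definition relu :: "real \<Rightarrow> real" where
  "relu s = max 0 s"

definition affine_layer ::
  "(nat \<Rightarrow> nat) \<Rightarrow> (nat \<Rightarrow> nat \<Rightarrow> nat \<Rightarrow> real) \<Rightarrow> (nat \<Rightarrow> nat \<Rightarrow> real)
    \<Rightarrow> nat \<Rightarrow> (nat \<Rightarrow> real) \<Rightarrow> nat \<Rightarrow> real" where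
  "affine_layer N A b l h i = (\<Sum>j<N (l - 1). A l i j * h j) + b l i"

primrec hidden ::
  "(nat \<Rightarrow> nat) \<Rightarrow> (nat \<Rightarrow> nat \<Rightarrow> nat \<Rightarrow> real) \<Rightarrow> (nat \<Rightarrow> nat \<Rightarrow> real)
    \<Rightarrow> nat \<Rightarrow> (nat \<Rightarrow> real) \<Rightarrow> nat \<Rightarrow> real" where
  "hidden N A b 0 x = x"
| "hidden N A b (Suc l) x = (\<lambda>i. relu (affine_layer N A b (Suc l) (hidden N A b l x) i))"

definition nn_realize ::
  "(nat \<Rightarrow> nat) \<Rightarrow> nat \<Rightarrow> (nat \<Rightarrow> nat \<Rightarrow> nat \<Rightarrow> real) \<Rightarrow> (nat \<Rightarrow> nat \<Rightarrow> real)
    \<Rightarrow> (nat \<Rightarrow> real) \<Rightarrow> real" where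
  "nn_realize N L A b x = affine_layer N A b L (hidden N A b (L - 1) x) 0"

definition NN :: "(nat \<Rightarrow> nat) \<Rightarrow> nat \<Rightarrow> ((nat \<Rightarrow> real) \<Rightarrow> real) set" where
  "NN N L = {\<phi>. \<exists>A b. \<phi> = nn_realize N L A b}"

end

theory Submission
  imports Defs
begin

(* Along the first coordinate axis, on which all inputs lie, every neuron of a ReLU network is
   piecewise affine. A layer of width N multiplies the number of pieces by at most N + 1: on a piece
   where its N inputs are affine, each ReLU switches at most once. Hence the output is affine on each
   of at most P = (N 1 + 1) ... (N (L - 1) + 1) consecutive pieces. Split the points into m P disjoint
   triples of consecutive points; at most P - 1 of them meet two pieces. On each remaining triple
   g o \<phi> is monotone while f alternates 0, 1, 0 or 1, 0, 1, so one of the three points is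
   misclassified by at least 1/2. *)

definition affine_on :: "real set \<Rightarrow> (real \<Rightarrow> real) \<Rightarrow> bool" where
  "affine_on S h \<longleftrightarrow> (\<exists>a c. \<forall>x\<in>S. h x = a * x + c)"

lemma affine_on_const: "affine_on S (\<lambda>x. c)"
  unfolding affine_on_def by (intro exI[of _ 0] exI[of _ c]) simp

lemma affine_on_ident: "affine_on S (\<lambda>x. x)"
  unfolding affine_on_def by (intro exI[of _ 1] exI[of _ 0]) simp

lemma affine_on_subset: "affine_on S h \<Longrightarrow> T \<subseteq> S \<Longrightarrow> affine_on T h"
  unfolding affine_on_def by blast

lemma affine_on_cong: "affine_on S h \<Longrightarrow> (\<And>x. x \<in> S \<Longrightarrow> h' x = h x) \<Longrightarrow> affine_on S h'"
  unfolding affine_on_def by simp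

lemma affine_on_add:
  assumes "affine_on S h" "affine_on S h'"
  shows "affine_on S (\<lambda>x. h x + h' x)"
proof -
  obtain a c a' c' where "\<forall>x\<in>S. h x = a * x + c" "\<forall>x\<in>S. h' x = a' * x + c'"
    using assms unfolding affine_on_def by blast
  then have "\<forall>x\<in>S. h x + h' x = (a + a') * x + (c + c')"
    by (simp add: algebra_simps)
  then show ?thesis unfolding affine_on_def by blast
qed

lemma affine_on_sum:
  assumes "\<And>n. n \<in> I \<Longrightarrow> affine_on S (h n)"
  shows "affine_on S (\<lambda>x. \<Sum>n\<in>I. \<alpha> n * h n x)"
proof -
  obtain a c where "\<forall>n\<in>I. \<forall>x\<in>S. h n x = a n * x + c n"
    using assms unfolding affine_on_def by metis
  then have "\<forall>x\<in>S. (\<Sum>n\<in>I. \<alpha> n * h n x) = (\<Sum>n\<in>I. \<alpha> n * a n) * x + (\<Sum>n\<in>I. \<alpha> n * c n)"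
    by (simp add: sum_distrib_right flip: sum.distrib) (simp add: algebra_simps)
  then show ?thesis unfolding affine_on_def by blast
qed

lemma affine_on_mono_or_antimono:
  assumes "affine_on S h"
  shows "mono_on S h \<or> antimono_on S h"
proof -
  obtain a c where h: "\<forall>x\<in>S. h x = a * x + c"
    using assms unfolding affine_on_def by blast
  show ?thesis
  proof (cases "0 \<le> a")
    case True
    then have "mono_on S h"
      by (intro monotone_onI) (simp add: h mult_left_mono)
    then show ?thesis ..
  next
    case False
    then have "antimono_on S h"
      by (intro monotone_onI) (simp add: h mult_left_mono_neg)
    then show ?thesis ..
  qed
qed

(* For h affine on S: x lies beyond the (at most one) sign change of h on S. *)
definition past_sign_change :: "real set \<Rightarrow> (real \<Rightarrow> real) \<Rightarrow> real \<Rightarrow> bool" where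
  "past_sign_change S h x \<longleftrightarrow> (if mono_on S h then 0 < h x else h x \<le> 0)"

lemma past_sign_change_mono:
  assumes "affine_on S h" "x \<in> S" "y \<in> S" "x \<le> y" "past_sign_change S h x"
  shows "past_sign_change S h y"
proof (cases "mono_on S h")
  case True
  then have "h x \<le> h y"
    using assms(2-4) by (rule monotone_onD)
  with True assms(5) show ?thesis
    by (simp add: past_sign_change_def)
next
  case False
  then have "antimono_on S h"
    using affine_on_mono_or_antimono[OF assms(1)] by blast
  then have "h y \<le> h x"
    using assms(2-4) by (rule monotone_onD)
  with False assms(5) show ?thesis
    by (simp add: past_sign_change_def)
qed

lemma mult_add_eq_mult_add_iff:
  fixes a a' r r' n :: nat
  assumes "r < n" "r' < n"
  shows "a * n + r = a' * n + r' \<longleftrightarrow> a = a' \<and> r = r'"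
  using assms by (metis add.commute div_mult_self1 div_less mod_mult_self1 mod_less add_0 less_nat_zero_code)

lemma mono_on_lex_label:
  fixes \<kappa> c :: "'a::order \<Rightarrow> nat"
  assumes mono: "mono_on X \<kappa>" and c_less: "\<And>x. c x < n"
    and c_mono: "\<And>x y. x \<in> X \<Longrightarrow> y \<in> X \<Longrightarrow> x \<le> y \<Longrightarrow> \<kappa> x = \<kappa> y \<Longrightarrow> c x \<le> c y"
  shows "mono_on X (\<lambda>x. \<kappa> x * n + c x)"
proof (rule monotone_onI)
  fix x y assume xy: "x \<in> X" "y \<in> X" "x \<le> y"
  show "\<kappa> x * n + c x \<le> \<kappa> y * n + c y"
  proof (cases "\<kappa> x = \<kappa> y")
    case True
    then show ?thesis
      using c_mono[OF xy True] by simp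
  next
    case False
    then have "\<kappa> x + 1 \<le> \<kappa> y"
      using monotone_onD[OF mono xy] by simp
    then have "\<kappa> x * n + n \<le> \<kappa> y * n"
      using mult_right_mono[of "\<kappa> x + 1" "\<kappa> y" n] by (simp only: distrib_right mult_1_left)
    then show ?thesis
      using c_less[of x] by linarith
  qed
qed

lemma mono_on_refine_label:
  fixes \<kappa> :: "'a::linorder \<Rightarrow> nat" and A :: "'a \<Rightarrow> nat set"
  assumes mono: "mono_on X \<kappa>" and bound: "\<forall>x\<in>X. \<kappa> x < Q" and A_sub: "\<And>x. A x \<subseteq> {..<M}"
    and A_mono: "\<And>x y. x \<in> X \<Longrightarrow> y \<in> X \<Longrightarrow> x \<le> y \<Longrightarrow> \<kappa> x = \<kappa> y \<Longrightarrow> A x \<subseteq> A y"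
  shows "\<exists>\<kappa>'. mono_on X \<kappa>' \<and> (\<forall>x\<in>X. \<kappa>' x < Q * (M + 1))
    \<and> (\<forall>x\<in>X. \<forall>y\<in>X. \<kappa>' x = \<kappa>' y \<longrightarrow> \<kappa> x = \<kappa> y \<and> A x = A y)"
proof -
  define \<kappa>' where "\<kappa>' x = \<kappa> x * (M + 1) + card (A x)" for x
  have finite_A: "finite (A x)" for x
    using A_sub[of x] finite_subset by blast
  have card_A: "card (A x) < M + 1" for x
    using card_mono[OF finite_lessThan A_sub[of x]] by simp
  have "mono_on X \<kappa>'"
    unfolding \<kappa>'_def using mono card_A card_mono[OF finite_A A_mono]
    by (rule mono_on_lex_label)
  moreover have "\<kappa>' x < Q * (M + 1)" if "x \<in> X" for x
  proof -
    have "\<kappa> x + 1 \<le> Q"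
      using bound that by (simp add: Suc_le_eq)
    then have "\<kappa> x * (M + 1) + (M + 1) \<le> Q * (M + 1)"
      using mult_right_mono[of "\<kappa> x + 1" Q "M + 1"] by (simp only: distrib_right mult_1_left)
    then show ?thesis
      using card_A[of x] unfolding \<kappa>'_def by linarith
  qed
  moreover have "\<kappa> x = \<kappa> y \<and> A x = A y" if xy: "x \<in> X" "y \<in> X" "\<kappa>' x = \<kappa>' y" for x y
  proof -
    have same_\<kappa>: "\<kappa> x = \<kappa> y" and card_eq: "card (A x) = card (A y)"
      using xy(3) unfolding \<kappa>'_def mult_add_eq_mult_add_iff[OF card_A card_A] by simp_all
    have "A x \<subseteq> A y \<or> A y \<subseteq> A x"
      using A_mono[OF xy(1,2) _ same_\<kappa>] A_mono[OF xy(2,1) _ same_\<kappa>[symmetric]] by (meson linear)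
    then have "A x = A y"
      using card_eq card_subset_eq[OF finite_A, of "A x" y] card_subset_eq[OF finite_A, of "A y" x] by auto
    with same_\<kappa> show ?thesis ..
  qed
  ultimately show ?thesis
    by blast
qed

lemma affine_on_finer_pieces:
  assumes "\<And>k. affine_on {x\<in>X. \<kappa> x = k} h"
    and "\<And>x y. x \<in> X \<Longrightarrow> y \<in> X \<Longrightarrow> \<kappa>' x = \<kappa>' y \<Longrightarrow> \<kappa> x = \<kappa> y"
  shows "affine_on {x\<in>X. \<kappa>' x = k} h"
proof (cases "\<exists>x0\<in>X. \<kappa>' x0 = k")
  case True
  then obtain x0 where x0: "x0 \<in> X" "\<kappa>' x0 = k"
    by blast
  have "{x\<in>X. \<kappa>' x = k} \<subseteq> {x\<in>X. \<kappa> x = \<kappa> x0}"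
  proof
    fix x assume "x \<in> {x\<in>X. \<kappa>' x = k}"
    then show "x \<in> {x\<in>X. \<kappa> x = \<kappa> x0}"
      using assms(2)[of x x0] x0 by simp
  qed
  then show ?thesis
    using assms(1) by (rule affine_on_subset[rotated])
next
  case False
  then show ?thesis
    unfolding affine_on_def by (intro exI) auto
qed

(* The pieces are the level sets of a monotone label, hence consecutive; on each piece the
   components h 0, ..., h (M - 1) are affine. *)
definition piecewise_affine_on :: "real set \<Rightarrow> nat \<Rightarrow> nat \<Rightarrow> (nat \<Rightarrow> real \<Rightarrow> real) \<Rightarrow> bool" where
  "piecewise_affine_on X Q M h \<longleftrightarrow>
     (\<exists>\<kappa>. mono_on X \<kappa> \<and> (\<forall>x\<in>X. \<kappa> x < Q) \<and> (\<forall>k. \<forall>n<M. affine_on {x\<in>X. \<kappa> x = k} (h n)))"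

lemma piecewise_affine_on_affine_map:
  assumes "piecewise_affine_on X Q M h"
  shows "piecewise_affine_on X Q M' (\<lambda>i x. (\<Sum>n<M. \<alpha> i n * h n x) + \<beta> i)"
proof -
  obtain \<kappa> where \<kappa>: "mono_on X \<kappa>" "\<forall>x\<in>X. \<kappa> x < Q"
    and aff: "\<And>k n. n < M \<Longrightarrow> affine_on {x\<in>X. \<kappa> x = k} (h n)"
    using assms unfolding piecewise_affine_on_def by blast
  have "affine_on {x\<in>X. \<kappa> x = k} (\<lambda>x. (\<Sum>n<M. \<alpha> i n * h n x) + \<beta> i)" for k i
    by (intro affine_on_add affine_on_sum affine_on_const) (simp add: aff)
  then show ?thesis
    unfolding piecewise_affine_on_def using \<kappa> by blast
qed

lemma piecewise_affine_on_sign_refinement: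
  assumes "piecewise_affine_on X Q M h"
  obtains \<kappa> where "mono_on X \<kappa>" "\<forall>x\<in>X. \<kappa> x < Q * (M + 1)"
    and "\<And>k n. n < M \<Longrightarrow> affine_on {x\<in>X. \<kappa> x = k} (h n)"
    and "\<And>x y n. x \<in> X \<Longrightarrow> y \<in> X \<Longrightarrow> \<kappa> x = \<kappa> y \<Longrightarrow> n < M \<Longrightarrow> 0 < h n x \<longleftrightarrow> 0 < h n y"
proof -
  obtain \<kappa> where mono: "mono_on X \<kappa>" and bound: "\<forall>x\<in>X. \<kappa> x < Q"
    and aff: "\<And>k n. n < M \<Longrightarrow> affine_on {x\<in>X. \<kappa> x = k} (h n)"
    using assms unfolding piecewise_affine_on_def by blast
  define piece where "piece x = {y\<in>X. \<kappa> y = \<kappa> x}" for x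
  \<comment> \<open>Along a piece the set of neurons past their sign change only grows, so its size refines \<kappa>.\<close>
  define active where "active x = {n. n < M \<and> past_sign_change (piece x) (h n) x}" for x
  have active_sub: "active x \<subseteq> {..<M}" for x
    by (auto simp: active_def)
  have active_mono: "active x \<subseteq> active y" if xy: "x \<in> X" "y \<in> X" "x \<le> y" "\<kappa> x = \<kappa> y" for x y
  proof
    fix n assume "n \<in> active x"
    then have "n < M" and sign_x: "past_sign_change (piece x) (h n) x"
      by (simp_all add: active_def)
    have "affine_on (piece x) (h n)"
      unfolding piece_def using aff[OF \<open>n < M\<close>] .
    moreover have "x \<in> piece x" "y \<in> piece x" and piece_eq: "piece y = piece x"
      using xy by (auto simp: piece_def)
    ultimately have "past_sign_change (piece x) (h n) y"
      using past_sign_change_mono \<open>x \<le> y\<close> sign_x by blast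
    then show "n \<in> active y"
      by (simp add: active_def piece_eq \<open>n < M\<close>)
  qed
  obtain \<kappa>' where mono': "mono_on X \<kappa>'" and bound': "\<forall>x\<in>X. \<kappa>' x < Q * (M + 1)"
    and same: "\<And>x y. x \<in> X \<Longrightarrow> y \<in> X \<Longrightarrow> \<kappa>' x = \<kappa>' y \<Longrightarrow> \<kappa> x = \<kappa> y \<and> active x = active y"
    using mono_on_refine_label[where A = active, OF mono bound active_sub active_mono] by blast
  have aff': "affine_on {x\<in>X. \<kappa>' x = k} (h n)" if "n < M" for k n
    by (rule affine_on_finer_pieces[OF aff[OF that]]) (use same in blast)
  have sign: "0 < h n x \<longleftrightarrow> 0 < h n y"
    if "x \<in> X" "y \<in> X" "\<kappa>' x = \<kappa>' y" "n < M" for x y n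
  proof -
    have "n \<in> active x \<longleftrightarrow> n \<in> active y"
      using same[OF that(1-3)] by simp
    then have "past_sign_change (piece x) (h n) x \<longleftrightarrow> past_sign_change (piece y) (h n) y"
      using \<open>n < M\<close> by (simp add: active_def)
    moreover have "piece x = piece y"
      using same[OF that(1-3)] by (simp add: piece_def)
    ultimately show ?thesis
      unfolding past_sign_change_def by (cases "mono_on (piece y) (h n)") auto
  qed
  show ?thesis
    using that[OF mono' bound' aff' sign] .
qed

lemma piecewise_affine_on_relu:
  assumes "piecewise_affine_on X Q M h"
  shows "piecewise_affine_on X (Q * (M + 1)) M (\<lambda>n x. relu (h n x))"
proof -
  obtain \<kappa> where \<kappa>: "mono_on X \<kappa>" "\<forall>x\<in>X. \<kappa> x < Q * (M + 1)"
    and aff: "\<And>k n. n < M \<Longrightarrow> affine_on {x\<in>X. \<kappa> x = k} (h n)"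
    and sign: "\<And>x y n. x \<in> X \<Longrightarrow> y \<in> X \<Longrightarrow> \<kappa> x = \<kappa> y \<Longrightarrow> n < M \<Longrightarrow> 0 < h n x \<longleftrightarrow> 0 < h n y"
    using piecewise_affine_on_sign_refinement[OF assms] by blast
  have "affine_on {x\<in>X. \<kappa> x = k} (\<lambda>x. relu (h n x))" if "n < M" for k n
  proof (cases "\<exists>x0\<in>X. \<kappa> x0 = k \<and> 0 < h n x0")
    case True
    then obtain x0 where x0: "x0 \<in> X" "\<kappa> x0 = k" "0 < h n x0"
      by blast
    have "relu (h n x) = h n x" if "x \<in> {x\<in>X. \<kappa> x = k}" for x
      using sign[of x x0 n] that x0 \<open>n < M\<close> by (simp add: relu_def)
    then show ?thesis
      by (rule affine_on_cong[OF aff[OF \<open>n < M\<close>]])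
  next
    case False
    then have "relu (h n x) = 0" if "x \<in> {x\<in>X. \<kappa> x = k}" for x
      using that by (auto simp: relu_def not_less)
    then show ?thesis
      by (rule affine_on_cong[OF affine_on_const])
  qed
  then show ?thesis
    unfolding piecewise_affine_on_def using \<kappa> by blast
qed

definition first_axis :: "real \<Rightarrow> nat \<Rightarrow> real" where
  "first_axis s = (\<lambda>j. if j = 0 then s else 0)"

lemma piecewise_affine_on_hidden:
  "piecewise_affine_on X (\<Prod>l'\<in>{1..l}. N l' + 1) (N l) (\<lambda>j x. hidden N A b l (first_axis x) j)"
proof (induction l)
  case 0
  have "affine_on S (\<lambda>x. first_axis x j)" for S j
    by (cases "j = 0") (simp_all add: first_axis_def affine_on_ident affine_on_const)
  then show ?case
    unfolding piecewise_affine_on_def by (intro exI[of _ "\<lambda>_. 0"]) (simp add: mono_on_const)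
next
  case (Suc l)
  from piecewise_affine_on_relu[OF piecewise_affine_on_affine_map[OF Suc.IH,
        where M' = "N (Suc l)" and \<alpha> = "A (Suc l)" and \<beta> = "b (Suc l)"]]
  show ?case
    by (simp add: affine_layer_def prod.cl_ivl_Suc)
qed

lemma piecewise_affine_on_nn_realize:
  "piecewise_affine_on X (\<Prod>l\<in>{1..L-1}. N l + 1) 1 (\<lambda>_ x. nn_realize N L A b (first_axis x))"
proof -
  have "piecewise_affine_on X (\<Prod>l\<in>{1..L-1}. N l + 1) 1
      (\<lambda>i x. (\<Sum>j<N (L - 1). A L i j * hidden N A b (L - 1) (first_axis x) j) + b L i)"
    by (rule piecewise_affine_on_affine_map[OF piecewise_affine_on_hidden])
  then obtain \<kappa> where "mono_on X \<kappa>" "\<forall>x\<in>X. \<kappa> x < (\<Prod>l\<in>{1..L-1}. N l + 1)"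
    and "\<And>k. affine_on {x\<in>X. \<kappa> x = k}
          (\<lambda>x. (\<Sum>j<N (L - 1). A L 0 j * hidden N A b (L - 1) (first_axis x) j) + b L 0)"
    unfolding piecewise_affine_on_def by blast
  then show ?thesis
    unfolding piecewise_affine_on_def nn_realize_def affine_layer_def by auto
qed

lemma misfit_on_affine_piece:
  fixes g :: "real \<Rightarrow> real" and y1 y2 y3 :: real
  assumes "affine_on S h" and "mono g \<or> antimono g"
    and "x1 \<in> S" "x2 \<in> S" "x3 \<in> S" "x1 \<le> x2" "x2 \<le> x3"
    and "y1 \<in> {0, 1}" "y2 \<in> {0, 1}" "y3 \<in> {0, 1}" "y1 \<noteq> y2" "y2 \<noteq> y3"
  shows "1/2 \<le> \<bar>g (h x1) - y1\<bar> \<or> 1/2 \<le> \<bar>g (h x2) - y2\<bar> \<or> 1/2 \<le> \<bar>g (h x3) - y3\<bar>"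
proof -
  have "mono_on S (g \<circ> h) \<or> antimono_on S (g \<circ> h)"
    using affine_on_mono_or_antimono[OF assms(1)] assms(2)
    by (auto simp: monotone_on_def monotone_def)
  then have "g (h x1) \<le> g (h x2) \<and> g (h x2) \<le> g (h x3) \<or> g (h x3) \<le> g (h x2) \<and> g (h x2) \<le> g (h x1)"
    using assms(3-7) by (auto dest: monotone_onD)
  \<comment> \<open>y1 = y3 = 1 - y2, and g (h x2) cannot be within 1/2 of y2 while g (h x1) and g (h x3)
    are within 1/2 of 1 - y2.\<close>
  then show ?thesis
    using assms(8-12) by (auto simp: abs_if)
qed

lemma strict_antimono_on_atLeastAtMostI:
  fixes x :: "nat \<Rightarrow> 'a::order"
  assumes step: "\<And>i. a \<le> i \<Longrightarrow> i < b \<Longrightarrow> x (Suc i) < x i"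
  shows "strict_antimono_on {a..b} x"
proof (rule monotone_onI)
  fix i j assume "i \<in> {a..b}" "j \<in> {a..b}" "i < j"
  then have "a \<le> i" "j \<le> b" "Suc i \<le> j"
    by simp_all
  from \<open>Suc i \<le> j\<close> show "x j < x i"
  proof (induction j rule: dec_induct)
    case base
    show ?case
      using step \<open>a \<le> i\<close> \<open>Suc i \<le> j\<close> \<open>j \<le> b\<close> by simp
  next
    case (step n)
    then have "x (Suc n) < x n"
      using assms \<open>a \<le> i\<close> \<open>j \<le> b\<close> by simp
    then show ?case
      using step.IH by (rule order.strict_trans)
  qed
qed

lemma card_constant_triples:
  fixes lab :: "nat \<Rightarrow> nat"
  assumes anti: "antimono_on {1..3 * T} lab" and bound: "\<forall>i\<in>{1..3 * T}. lab i < P"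
  shows "T - (P - 1) \<le> card {k. k < T \<and> lab (3 * k + 1) = lab (3 * k + 3)}"
proof -
  define changed where "changed = {k. k < T \<and> lab (3 * k + 3) < lab (3 * k + 1)}"
  have lab_le: "lab (3 * j + 1) \<le> lab (3 * i + 3)" if "i < j" "j < T" for i j
    using monotone_onD[OF anti, of "3 * i + 3" "3 * j + 1"] that by auto
  have lab_step: "lab (3 * k + 3) \<le> lab (3 * k + 1)" "lab (3 * k + 1) < P" if "k < T" for k
    using monotone_onD[OF anti, of "3 * k + 1" "3 * k + 3"] bound that by auto
  have "lab (3 * j + 3) < lab (3 * i + 3)" if "i \<in> changed" "j \<in> changed" "i < j" for i j
    using that lab_le[of i j] unfolding changed_def by simp
  then have "inj_on (\<lambda>k. lab (3 * k + 3)) changed"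
    by (intro linorder_inj_onI') (metis less_irrefl)
  moreover have "(\<lambda>k. lab (3 * k + 3)) ` changed \<subseteq> {..<P - 1}"
    using lab_step(2) unfolding changed_def by fastforce
  ultimately have "card changed \<le> P - 1"
    using card_inj_on_le[of _ changed "{..<P - 1}"] by simp
  moreover have "{k. k < T \<and> lab (3 * k + 1) = lab (3 * k + 3)} = {..<T} - changed"
    using lab_step(1) unfolding changed_def by fastforce
  moreover have "changed \<subseteq> {..<T}"
    by (auto simp: changed_def)
  ultimately show ?thesis
    using card_Diff_subset[of changed "{..<T}"] finite_subset[of changed "{..<T}"] by simp
qed

lemma pick_from_disjoint_triples:
  fixes K :: "nat set" and bad :: "nat \<Rightarrow> bool"
  assumes "\<And>k. k \<in> K \<Longrightarrow> \<exists>e\<in>{3 * k + 1..3 * k + 3}. bad e"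
  shows "\<exists>E \<subseteq> (\<Union>k\<in>K. {3 * k + 1..3 * k + 3}). card E = card K \<and> (\<forall>e\<in>E. bad e)"
proof -
  obtain pick where pick: "\<And>k. k \<in> K \<Longrightarrow> pick k \<in> {3 * k + 1..3 * k + 3} \<and> bad (pick k)"
    using assms by metis
  have "inj_on pick K"
  proof (rule inj_onI)
    fix k k' assume "k \<in> K" "k' \<in> K" "pick k = pick k'"
    then have "3 * k + 1 \<le> 3 * k' + 3" "3 * k' + 1 \<le> 3 * k + 3"
      using pick[of k] pick[of k'] by auto
    then show "k = k'"
      by presburger
  qed
  then have "card (pick ` K) = card K"
    by (rule card_image)
  moreover have "pick ` K \<subseteq> (\<Union>k\<in>K. {3 * k + 1..3 * k + 3})"
    using pick by blast
  moreover have "\<forall>e\<in>pick ` K. bad e"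
    using pick by blast
  ultimately show ?thesis
    by blast
qed

lemma many_misfits_in_triples:
  fixes lab :: "nat \<Rightarrow> nat" and bad :: "nat \<Rightarrow> bool"
  assumes anti: "antimono_on {1..t} lab" and bound: "\<forall>i\<in>{1..t}. lab i < P" and "0 < P"
    and t: "3 * m * P \<le> t"
    and triple: "\<And>i. 1 \<le> i \<Longrightarrow> i + 2 \<le> t \<Longrightarrow> lab i = lab (i + 2) \<Longrightarrow> \<exists>e\<in>{i..i + 2}. bad e"
  shows "\<exists>E \<subseteq> {1..t}. m \<le> card E \<and> (\<forall>e\<in>E. bad e)"
proof -
  define K where "K = {k. k < m * P \<and> lab (3 * k + 1) = lab (3 * k + 3)}"
  have sub: "{1..3 * (m * P)} \<subseteq> {1..t}"
    using t by auto
  have "m * P - (P - 1) \<le> card K"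
    unfolding K_def
    by (rule card_constant_triples) (use monotone_on_subset[OF anti sub] bound sub in auto)
  moreover have "m \<le> m * P - (P - 1)"
    using \<open>0 < P\<close> by (cases m) (auto simp: algebra_simps)
  ultimately have card_K: "m \<le> card K"
    by linarith
  have K_le: "3 * k + 3 \<le> t" if "k \<in> K" for k
    using that t unfolding K_def by auto
  have "\<exists>e\<in>{3 * k + 1..3 * k + 3}. bad e" if "k \<in> K" for k
  proof -
    have eq: "3 * k + 1 + 2 = 3 * k + 3"
      by simp
    have "lab (3 * k + 1) = lab (3 * k + 3)"
      using that unfolding K_def by blast
    then show ?thesis
      by (rule triple[of "3 * k + 1", unfolded eq, OF le_add2 K_le[OF that]])
  qed
  then have "\<exists>E \<subseteq> (\<Union>k\<in>K. {3 * k + 1..3 * k + 3}). card E = card K \<and> (\<forall>e\<in>E. bad e)"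
    by (rule pick_from_disjoint_triples)
  then obtain E where E: "E \<subseteq> (\<Union>k\<in>K. {3 * k + 1..3 * k + 3})" "card E = card K" "\<forall>e\<in>E. bad e"
    by blast
  have "E \<subseteq> {1..t}"
  proof
    fix e assume "e \<in> E"
    then obtain k where "k \<in> K" "e \<in> {3 * k + 1..3 * k + 3}"
      using E(1) by blast
    then show "e \<in> {1..t}"
      using K_le[of k] by simp
  qed
  then show ?thesis
    using E(2,3) card_K by (intro exI[of _ E]) simp
qed

lemma antimono_on_comp_mono_on:
  assumes "mono_on (x ` A) \<kappa>" "antimono_on A x"
  shows "antimono_on A (\<kappa> \<circ> x)"
proof (rule monotone_onI)
  fix i j assume ij: "i \<in> A" "j \<in> A" "i \<le> j"
  then have "x j \<le> x i"
    by (rule monotone_onD[OF assms(2)])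
  then show "(\<kappa> \<circ> x) j \<le> (\<kappa> \<circ> x) i"
    using ij by (simp add: monotone_onD[OF assms(1)])
qed

lemma misfits_of_piecewise_affine:
  fixes x y :: "nat \<Rightarrow> real" and \<psi> g :: "real \<Rightarrow> real"
  assumes dec: "\<And>i. 1 \<le> i \<Longrightarrow> i < t \<Longrightarrow> x (Suc i) < x i"
    and pieces: "piecewise_affine_on (x ` {1..t}) P 1 (\<lambda>_. \<psi>)" and "0 < P" and "3 * m * P \<le> t"
    and g: "mono g \<or> antimono g"
    and y: "\<And>i. y i \<in> {0, 1}" and alt: "\<And>i. 1 \<le> i \<Longrightarrow> i < t \<Longrightarrow> y i \<noteq> y (Suc i)"
  shows "\<exists>E \<subseteq> {1..t}. m \<le> card E \<and> (\<forall>e\<in>E. 1/2 \<le> \<bar>g (\<psi> (x e)) - y e\<bar>)"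
proof -
  have "strict_antimono_on {1..t} x"
    by (rule strict_antimono_on_atLeastAtMostI) (simp add: dec)
  then have x_anti: "antimono_on {1..t} x"
    by (simp add: strict_antimono_iff_antimono)
  obtain \<kappa> where \<kappa>_mono: "mono_on (x ` {1..t}) \<kappa>" and \<kappa>_bound: "\<forall>s\<in>x ` {1..t}. \<kappa> s < P"
    and \<kappa>_aff: "\<And>k. affine_on {s \<in> x ` {1..t}. \<kappa> s = k} \<psi>"
    using pieces unfolding piecewise_affine_on_def by auto
  have lab_anti: "antimono_on {1..t} (\<kappa> \<circ> x)"
    by (rule antimono_on_comp_mono_on[OF \<kappa>_mono x_anti])
  have "\<exists>e\<in>{i..i + 2}. 1/2 \<le> \<bar>g (\<psi> (x e)) - y e\<bar>"
    if i: "1 \<le> i" "i + 2 \<le> t" "(\<kappa> \<circ> x) i = (\<kappa> \<circ> x) (i + 2)" for i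
  proof -
    have i2: "i + 2 = Suc (Suc i)"
      by simp
    have range: "i \<in> {1..t}" "Suc i \<in> {1..t}" "Suc (Suc i) \<in> {1..t}"
      using i unfolding i2 by simp_all
    have "\<kappa> (x (Suc (Suc i))) \<le> \<kappa> (x (Suc i))" "\<kappa> (x (Suc i)) \<le> \<kappa> (x i)"
      using monotone_onD[OF lab_anti range(2,3)] monotone_onD[OF lab_anti range(1,2)] by simp_all
    then have "x (Suc (Suc i)) \<in> {s \<in> x ` {1..t}. \<kappa> s = \<kappa> (x i)}"
      "x (Suc i) \<in> {s \<in> x ` {1..t}. \<kappa> s = \<kappa> (x i)}" "x i \<in> {s \<in> x ` {1..t}. \<kappa> s = \<kappa> (x i)}"
      using range i(3) unfolding i2 by simp_all
    moreover have "x (Suc (Suc i)) \<le> x (Suc i)" "x (Suc i) \<le> x i"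
      using monotone_onD[OF x_anti range(2,3)] monotone_onD[OF x_anti range(1,2)] by simp_all
    moreover have "y (Suc (Suc i)) \<noteq> y (Suc i)" "y (Suc i) \<noteq> y i"
      using alt[of i] alt[of "Suc i"] i unfolding i2 by simp_all
    ultimately have "1/2 \<le> \<bar>g (\<psi> (x (Suc (Suc i)))) - y (Suc (Suc i))\<bar>
        \<or> 1/2 \<le> \<bar>g (\<psi> (x (Suc i))) - y (Suc i)\<bar> \<or> 1/2 \<le> \<bar>g (\<psi> (x i)) - y i\<bar>"
      by (intro misfit_on_affine_piece[OF \<kappa>_aff g _ _ _ _ _ y y y])
    then show ?thesis
      unfolding i2 by auto
  qed
  moreover have "\<forall>i\<in>{1..t}. (\<kappa> \<circ> x) i < P"
    using \<kappa>_bound by simp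
  ultimately show ?thesis
    using many_misfits_in_triples[OF lab_anti _ \<open>0 < P\<close> \<open>3 * m * P \<le> t\<close>] by blast
qed

lemma prod_widths_last_one:
  fixes N :: "nat \<Rightarrow> nat"
  assumes "1 \<le> L" "N L = 1"
  shows "(\<Prod>l\<in>{1..L}. real (N l + 1)) = 2 * real (\<Prod>l\<in>{1..L-1}. N l + 1)"
proof -
  have "(\<Prod>l\<in>{1..L}. N l + 1) = (\<Prod>l\<in>{1..L-1}. N l + 1) * 2"
    using assms prod.cl_ivl_Suc[of "\<lambda>l. N l + 1" 1 "L - 1"] by simp
  then show ?thesis
    by (metis mult.commute of_nat_mult of_nat_numeral of_nat_prod)
qed

theorem lemma5p4:
  fixes d t m L :: nat and N :: "nat \<Rightarrow> nat"
    and w :: "nat \<Rightarrow> nat \<Rightarrow> real"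
    and f :: "(nat \<Rightarrow> real) \<Rightarrow> real"
    and \<phi> :: "(nat \<Rightarrow> real) \<Rightarrow> real"
    and g :: "real \<Rightarrow> real"
  assumes "d \<ge> 1" and "L \<ge> 1" and "N 0 = d" and "N L = 1"
    and "real t \<ge> 3 * real m * (\<Prod>l\<in>{1..L}. real (N l + 1))"
    and "\<And>i. 1 \<le> i \<Longrightarrow> i < t \<Longrightarrow> w i 0 > w (Suc i) 0"
    and "\<And>i j. 1 \<le> i \<Longrightarrow> i \<le> t \<Longrightarrow> j \<ge> 1 \<Longrightarrow> w i j = 0"
    and "\<And>x. f x \<in> {0, 1}"
    and "\<And>i. 1 \<le> i \<Longrightarrow> i < t \<Longrightarrow> f (w i) \<noteq> f (w (Suc i))"
    and "\<phi> \<in> NN N L"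
    and "mono g \<or> antimono g"
  shows "\<exists>U. U \<subseteq> w ` {1..t} \<and> card U \<ge> m \<and> (\<forall>u\<in>U. \<bar>g (\<phi> u) - f u\<bar> \<ge> 1/2)"
proof -
  obtain A b where \<phi>: "\<phi> = nn_realize N L A b"
    using assms(10) unfolding NN_def by blast
  define P where "P = (\<Prod>l\<in>{1..L-1}. N l + 1)"
  define x where "x i = w i 0" for i
  have w_axis: "w i = first_axis (x i)" if "i \<in> {1..t}" for i
    using assms(7) that unfolding x_def first_axis_def by fastforce
  have dec: "x (Suc i) < x i" if "1 \<le> i" "i < t" for i
    using assms(6)[OF that] by (simp add: x_def)
  have "0 < P"
    unfolding P_def by (simp add: prod_pos)
  have "real (3 * m * P * 2) \<le> real t"
    using assms(5) prod_widths_last_one[of L N, OF assms(2,4)] unfolding P_def by simp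
  then have "3 * m * P \<le> t"
    by linarith
  have pieces: "piecewise_affine_on (x ` {1..t}) P 1 (\<lambda>_ s. \<phi> (first_axis s))"
    unfolding P_def \<phi> by (rule piecewise_affine_on_nn_realize)
  have "\<exists>E \<subseteq> {1..t}. m \<le> card E \<and> (\<forall>e\<in>E. 1/2 \<le> \<bar>g (\<phi> (first_axis (x e))) - f (w e)\<bar>)"
    by (rule misfits_of_piecewise_affine[where y = "\<lambda>i. f (w i)",
          OF dec pieces \<open>0 < P\<close> \<open>3 * m * P \<le> t\<close> assms(11) assms(8) assms(9)])
  then obtain E where E: "E \<subseteq> {1..t}" "m \<le> card E"
    and misfit: "\<forall>e\<in>E. 1/2 \<le> \<bar>g (\<phi> (first_axis (x e))) - f (w e)\<bar>"
    by blast
  have "inj_on x {1..t}"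
    using strict_antimono_on_atLeastAtMostI[where a = 1 and b = t and x = x, OF dec]
    by (simp add: strict_antimono_iff_antimono)
  then have "inj_on w E"
    using E(1) unfolding x_def inj_on_def by (metis subsetD)
  moreover have "1/2 \<le> \<bar>g (\<phi> (w e)) - f (w e)\<bar>" if "e \<in> E" for e
    using misfit[rule_format, OF that] w_axis[OF subsetD[OF E(1) that]] by simp
  ultimately show ?thesis
    using E by (intro exI[of _ "w ` E"]) (simp add: card_image image_mono)
qed

end
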